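(* Let $d,n$ be positive integers and let $\xi_1,\ldots,\xi_n$ be independent Rademacher random variables (uniform on $\{1,-1\}$). Let $\mathbf{u}_1,\ldots,\mathbf{u}_n\in\mathbb{C}^d$ form a tight frame, i.e. $\sum_{i=1}^n\mathbf{u}_i\mathbf{u}_i^*=C\cdot\mathbf{I}$ for some constant $C>0$, and set $\sigma^2=\big\|\sum_{i=1}^n(\mathbf{u}_i\mathbf{u}_i^* )^2\big\|$. Then $$\min_{\varepsilon_1,\ldots,\varepsilon_n\in\{1,-1\}}\Big\|\sum_{i=1}^n\varepsilon_i\mathbf{u}_i\mathbf{u}_i^*\Big\|\le\sqrt{\frac{n}{d}}\cdot\sigma.$$ Moreover, if $\mathbf{u}_1,\ldots,\mathbf{u}_n$ form a unit-norm tight frame, i.e. $\|\mathbf{u}_i\|=1$ for all $i$ and $\sum_{i=1}^n\mathbf{u}_i\mathbf{u}_i^*=\frac{n}{d}\mathbf{I}$, and $d\le n\le 2d-1$, then $$\min_{\varepsilon_1,\ldots,\varepsilon_n\in\{1,-1\}}\Big\|\sum_{i=1}^n\varepsilon_i\mathbf{u}_i\mathbf{u}_i^*\Big\|=\sqrt{\frac{n}{d}}\cdot\sigma.$$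
   Context: $\|\cdot\|$ is the spectral norm. (The left-hand side is the matrix discrepancy $\min_{\varepsilon_i\in\{\pm1\}}\|\sum_i\mathbb{E}[\xi_i]\mathbf{u}_i\mathbf{u}_i^*-\sum_i\varepsilon_i\mathbf{u}_i\mathbf{u}_i^*\|$, with $\mathbb{E}[\xi_i]=0$.) *)

theory Defs
  imports "HOL-Analysis.Analysis"
begin

definition outer :: "complex^'d \<Rightarrow> complex^'d^'d" where
  "outer u = (\<chi> i j. u $ i * cnj (u $ j))"

definition spec_norm :: "complex^'d^'d \<Rightarrow> real" where
  "spec_norm A = onorm (\<lambda>x. A *v x)"

definition sign_disc :: "nat \<Rightarrow> (nat \<Rightarrow> complex^'d) \<Rightarrow> real" where
  "sign_disc n u = Min ((\<lambda>\<epsilon>. spec_norm (\<Sum>i<n. \<epsilon> i *\<^sub>R outer (u i)))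
                        ` ({..<n} \<rightarrow>\<^sub>E {1, -1::real}))"

end

theory Submission
  imports Defs
begin

text \<open>Taking all signs equal to \<open>+1\<close> shows that the discrepancy is at most the frame constant \<open>C\<close>.
  Comparing traces, \<open>\<Sum>\<^sub>i |u\<^sub>i|\<^sup>2 = d C\<close> and
  \<open>\<Sum>\<^sub>i |u\<^sub>i|\<^sup>4 = tr (\<Sum>\<^sub>i (u\<^sub>i u\<^sub>i\<^sup>*)\<^sup>2) \<le> d \<sigma>\<^sup>2\<close>, so Cauchy-Schwarz gives
  \<open>(d C)\<^sup>2 \<le> n d \<sigma>\<^sup>2\<close>, i.e. \<open>C \<le> sqrt (n/d) \<sigma>\<close>.
  If \<open>n < 2d\<close>, then for every choice of signs one sign class has fewer than \<open>d\<close> members, so some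
  nonzero \<open>x\<close> is orthogonal to all of its vectors and the signed sum acts on \<open>x\<close> as \<open>\<plusminus>C\<close>; hence
  the discrepancy of the tight frame is exactly \<open>C\<close>. For a unit-norm tight frame
  \<open>(u\<^sub>i u\<^sub>i\<^sup>*)\<^sup>2 = u\<^sub>i u\<^sub>i\<^sup>*\<close>, so \<open>\<sigma>\<^sup>2 = C = n/d\<close> and the bound is attained.\<close>

lemma matrix_vector_mult_mat_of_real:
  "mat (complex_of_real c) *v x = c *\<^sub>R (x::complex^'d)"
  unfolding vec_eq_iff vector_scaleR_component
  by (simp add: matrix_vector_mult_def mat_def scaleR_conv_of_real
      if_distrib[where f="\<lambda>a. a * _"] cong: if_cong)

lemma scaleR_matrix_vector_mult:
  fixes A :: "complex^'n^'m"
  shows "(r *\<^sub>R A) *v x = r *\<^sub>R (A *v x)"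
  by (simp only: vec_eq_iff matrix_vector_mult_def vec_lambda_beta vector_scaleR_component)
     (simp add: scaleR_conv_of_real sum_distrib_left mult.assoc)

lemma sum_matrix_vector_mult:
  "(\<Sum>i\<in>I. A i) *v x = (\<Sum>i\<in>I. A i *v x)"
  by (induction I rule: infinite_finite_induct) (simp_all add: matrix_vector_mult_add_rdistrib)

lemma outer_matrix_vector_mult: "outer u *v x = (\<Sum>k\<in>UNIV. cnj (u$k) * x$k) *s u"
  by (simp add: vec_eq_iff outer_def matrix_vector_mult_def sum_distrib_left mult_ac)

lemma trace_sum: "trace (\<Sum>i\<in>I. A i) = (\<Sum>i\<in>I. trace (A i))"
  unfolding trace_def by (simp add: sum_component sum.swap[of _ I])

lemma trace_scaleR: "trace (r *\<^sub>R A) = complex_of_real r * trace A"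
  unfolding trace_def vector_scaleR_component by (simp add: scaleR_conv_of_real sum_distrib_left)

lemma trace_mat: "trace (mat c :: 'a::semiring_1^'n^'n) = of_nat CARD('n) * c"
  by (simp add: trace_def mat_def)

lemma trace_outer: "trace (outer u) = complex_of_real ((norm u)\<^sup>2)"
proof -
  have "trace (outer u) = (\<Sum>k\<in>UNIV. complex_of_real ((cmod (u$k))\<^sup>2))"
    by (simp only: trace_def outer_def vec_lambda_beta complex_norm_square)
  also have "\<dots> = complex_of_real ((norm u)\<^sup>2)"
    by (simp add: norm_vec_def L2_set_def sum_nonneg del: of_real_power)
  finally show ?thesis .
qed

lemma outer_mult_outer_self: "outer u ** outer u = (norm u)\<^sup>2 *\<^sub>R outer u"
proof -
  have norm_sq: "(\<Sum>m\<in>UNIV. u$m * cnj (u$m)) = complex_of_real ((norm u)\<^sup>2)"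
    using trace_outer[of u] unfolding trace_def outer_def vec_lambda_beta .
  have "(\<Sum>m\<in>UNIV. u$j * cnj (u$m) * (u$m * cnj (u$k)))
        = u$j * cnj (u$k) * (\<Sum>m\<in>UNIV. u$m * cnj (u$m))" for j k
    by (simp add: sum_distrib_left mult_ac)
  then show ?thesis
    by (simp only: vec_eq_iff matrix_matrix_mult_def vec_lambda_beta vector_scaleR_component
        outer_def norm_sq) (simp add: scaleR_conv_of_real mult_ac)
qed

lemma spec_norm_mat_of_real: "spec_norm (mat (complex_of_real c) :: complex^'d^'d) = \<bar>c\<bar>"
proof -
  have "onorm (\<lambda>x::complex^'d. c *\<^sub>R x) = \<bar>c\<bar> * onorm (\<lambda>x::complex^'d. x)"
    by (rule onorm_scaleR[OF bounded_linear_ident])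
  then show ?thesis
    unfolding spec_norm_def matrix_vector_mult_mat_of_real by (simp add: onorm_id)
qed

lemma norm_matrix_vector_mult_le: "norm (A *v x) \<le> spec_norm A * norm x"
  for A :: "complex^'d^'d"
  unfolding spec_norm_def by (rule onorm) simp

lemma spec_norm_ge_eigenvalue:
  assumes "x \<noteq> 0" and "A *v x = c *\<^sub>R x"
  shows "\<bar>c\<bar> \<le> spec_norm (A :: complex^'d^'d)"
  using norm_matrix_vector_mult_le[of A x] assms by simp

lemma norm_diag_le_spec_norm: "norm (A $ j $ j) \<le> spec_norm (A :: complex^'d^'d)"
proof -
  have "axis j 1 \<in> (Basis :: (complex^'d) set)"
    by (auto simp: Basis_vec_def)
  then have unit: "norm (axis j (1::complex)) = 1"
    by (rule norm_Basis)
  have "A $ j $ j = (A *v axis j 1) $ j"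
    by (simp add: matrix_vector_mult_def axis_def if_distrib[where f="\<lambda>a. _ * a"] cong: if_cong)
  then have "norm (A $ j $ j) \<le> norm (A *v axis j 1)"
    by (metis Finite_Cartesian_Product.norm_nth_le)
  also have "\<dots> \<le> spec_norm A"
    using norm_matrix_vector_mult_le[of A "axis j 1"] unit by simp
  finally show ?thesis .
qed

lemma norm_trace_le_spec_norm: "norm (trace A) \<le> CARD('d) * spec_norm (A :: complex^'d^'d)"
proof -
  have "norm (trace A) \<le> (\<Sum>j\<in>UNIV. norm (A $ j $ j))"
    unfolding trace_def by (rule norm_sum)
  also have "\<dots> \<le> CARD('d) * spec_norm A"
    using sum_bounded_above[of UNIV "\<lambda>j. norm (A $ j $ j)" "spec_norm A"] norm_diag_le_spec_norm[of A]
    by simp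
  finally show ?thesis .
qed

text \<open>The real span of \<open>V \<union> \<i> V\<close> is a proper subspace of the \<open>2d\<close>-dimensional real space
  \<open>complex^'d\<close>; a real normal vector to it is orthogonal to \<open>V\<close> in the Hermitian sense, the
  real inner products with \<open>v\<close> and \<open>\<i> v\<close> being the real and imaginary parts.\<close>
lemma exists_nonzero_orthogonal:
  fixes V :: "(complex^'d) set"
  assumes "finite V" and "card V < CARD('d)"
  shows "\<exists>x. x \<noteq> 0 \<and> (\<forall>v\<in>V. (\<Sum>k\<in>UNIV. cnj (v$k) * x$k) = 0)"
proof -
  define S where "S = V \<union> (\<lambda>v. \<i> *s v) ` V"
  have "dim S \<le> card S"
    using assms(1) by (intro dim_le_card[OF span_superset]) (simp add: S_def)
  also have "\<dots> \<le> card V + card V"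
    unfolding S_def using card_Un_le card_image_le[OF assms(1)] by (metis add_left_mono order_trans)
  also have "\<dots> < DIM(complex^'d)"
    using assms(2) by simp
  finally obtain a :: "complex^'d" where a: "a \<noteq> 0" "span S \<subseteq> {x. a \<bullet> x = 0}"
    using lowdim_subset_hyperplane by blast
  have "(\<Sum>k\<in>UNIV. cnj (v$k) * a$k) = 0" if "v \<in> V" for v
  proof -
    have "v \<in> span S" "\<i> *s v \<in> span S"
      using that by (auto simp: S_def intro: span_base)
    then have "a \<bullet> v = 0" "a \<bullet> (\<i> *s v) = 0"
      using a(2) by auto
    then show ?thesis
      by (simp add: complex_eq_iff inner_vec_def inner_complex_def Re_sum Im_sum algebra_simps
          sum_subtractf)
  qed
  then show ?thesis
    using a(1) by blast
qed

lemma sign_disc_le: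
  assumes "\<epsilon> \<in> {..<n} \<rightarrow>\<^sub>E {1, -1::real}"
  shows "sign_disc n u \<le> spec_norm (\<Sum>i<n. \<epsilon> i *\<^sub>R outer (u i))"
  unfolding sign_disc_def by (rule Min_le) (use assms in \<open>auto simp: finite_PiE\<close>)

lemma le_sign_disc:
  assumes "\<And>\<epsilon>. \<epsilon> \<in> {..<n} \<rightarrow>\<^sub>E {1, -1::real} \<Longrightarrow> c \<le> spec_norm (\<Sum>i<n. \<epsilon> i *\<^sub>R outer (u i))"
  shows "c \<le> sign_disc n u"
  unfolding sign_disc_def
  by (subst Min_ge_iff) (use assms in \<open>auto simp: finite_PiE PiE_eq_empty_iff\<close>)

lemma sign_disc_tight_frame_le:
  assumes frame: "(\<Sum>i<n. outer (u i)) = mat (complex_of_real C)"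
  shows "sign_disc n u \<le> \<bar>C\<bar>"
proof -
  have "(\<Sum>i<n. restrict (\<lambda>_. 1) {..<n} i *\<^sub>R outer (u i)) = (\<Sum>i<n. outer (u i))"
    by (rule sum.cong) auto
  then show ?thesis
    using sign_disc_le[of "restrict (\<lambda>_. 1) {..<n}" n u] by (simp add: frame spec_norm_mat_of_real)
qed

lemma tight_frame_constant_le:
  fixes u :: "nat \<Rightarrow> complex^'d"
  assumes frame: "(\<Sum>i<n. outer (u i)) = mat (complex_of_real C)"
  shows "\<bar>C\<bar> \<le> sqrt (real n / real CARD('d)) * sqrt (spec_norm (\<Sum>i<n. outer (u i) ** outer (u i)))"
proof -
  define d where "d = real CARD('d)"
  define S where "S = (\<Sum>i<n. outer (u i) ** outer (u i))"
  have "complex_of_real (\<Sum>i<n. (norm (u i))\<^sup>2) = trace (\<Sum>i<n. outer (u i))"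
    by (simp add: trace_sum trace_outer)
  also have "\<dots> = complex_of_real (d * C)"
    by (simp add: frame trace_mat d_def)
  finally have sum_sq: "(\<Sum>i<n. (norm (u i))\<^sup>2) = d * C"
    by (simp only: of_real_eq_iff)
  have "trace S = complex_of_real (\<Sum>i<n. ((norm (u i))\<^sup>2)\<^sup>2)"
    by (simp add: S_def outer_mult_outer_self trace_sum trace_scaleR trace_outer power2_eq_square)
  then have "(\<Sum>i<n. ((norm (u i))\<^sup>2)\<^sup>2) = norm (trace S)"
    by (simp add: sum_nonneg del: of_real_sum of_real_power)
  also have "\<dots> \<le> d * spec_norm S"
    unfolding d_def by (rule norm_trace_le_spec_norm)
  finally have sum_pow4: "(\<Sum>i<n. ((norm (u i))\<^sup>2)\<^sup>2) \<le> d * spec_norm S" .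
  have "(d * C)\<^sup>2 \<le> (\<Sum>i<n. ((norm (u i))\<^sup>2)\<^sup>2) * n"
    using sum_squared_le_sum_of_squares[of "\<lambda>i. (norm (u i))\<^sup>2" "{..<n}"] by (simp add: sum_sq)
  also have "\<dots> \<le> d * spec_norm S * n"
    using sum_pow4 by (simp add: mult_right_mono)
  finally have "C\<^sup>2 \<le> n / d * spec_norm S"
    by (simp add: d_def power2_eq_square field_simps)
  then have "sqrt (C\<^sup>2) \<le> sqrt (n / d * spec_norm S)"
    by (rule real_sqrt_le_mono)
  then show ?thesis
    by (simp only: S_def d_def real_sqrt_mult real_sqrt_abs)
qed

lemma tight_frame_constant_le_spec_norm_signed:
  fixes u :: "nat \<Rightarrow> complex^'d"
  assumes frame: "(\<Sum>i<n. outer (u i)) = mat (complex_of_real C)"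
    and n: "n \<le> 2 * CARD('d) - 1" and \<epsilon>: "\<epsilon> \<in> {..<n} \<rightarrow>\<^sub>E {1, -1::real}"
  shows "\<bar>C\<bar> \<le> spec_norm (\<Sum>i<n. \<epsilon> i *\<^sub>R outer (u i))"
proof -
  define minority where "minority s = {i. i < n \<and> \<epsilon> i \<noteq> s}" for s
  obtain s where s: "s = 1 \<or> s = -1" and small: "card (minority s) < CARD('d)"
  proof -
    have "\<epsilon> i = 1 \<or> \<epsilon> i = -1" if "i < n" for i
      using PiE_mem[OF \<epsilon>, of i] that by simp
    then have "minority 1 \<union> minority (-1) = {..<n}" "minority 1 \<inter> minority (-1) = {}"
      by (auto simp: minority_def)
    then have "card (minority 1) + card (minority (-1)) = n"
      by (metis card_Un_disjoint card_lessThan finite_Un finite_lessThan)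
    then have "card (minority 1) < CARD('d) \<or> card (minority (-1)) < CARD('d)"
      using n zero_less_card_finite[where 'a='d] by linarith
    then show thesis
      using that by blast
  qed
  have "finite (u ` minority s)" "card (u ` minority s) < CARD('d)"
    using card_image_le[of "minority s" u] small by (auto simp: minority_def)
  then obtain x :: "complex^'d" where x: "x \<noteq> 0"
    and orth: "\<forall>v \<in> u ` minority s. (\<Sum>k\<in>UNIV. cnj (v$k) * x$k) = 0"
    using exists_nonzero_orthogonal by blast
  have kernel: "outer (u i) *v x = 0" if "i \<in> minority s" for i
  proof -
    have "(\<Sum>k\<in>UNIV. cnj (u i$k) * x$k) = 0"
      using orth that by blast
    then show ?thesis
      by (simp add: outer_matrix_vector_mult)
  qed
  have "(\<Sum>i<n. \<epsilon> i *\<^sub>R outer (u i)) *v x = (\<Sum>i<n. \<epsilon> i *\<^sub>R (outer (u i) *v x))"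
    by (simp add: sum_matrix_vector_mult scaleR_matrix_vector_mult)
  also have "\<dots> = (\<Sum>i<n. s *\<^sub>R (outer (u i) *v x))"
    using kernel by (intro sum.cong) (auto simp: minority_def)
  also have "\<dots> = s *\<^sub>R ((\<Sum>i<n. outer (u i)) *v x)"
    by (simp add: sum_matrix_vector_mult scaleR_sum_right)
  also have "\<dots> = (s * C) *\<^sub>R x"
    by (simp add: frame matrix_vector_mult_mat_of_real)
  finally have "\<bar>s * C\<bar> \<le> spec_norm (\<Sum>i<n. \<epsilon> i *\<^sub>R outer (u i))"
    by (rule spec_norm_ge_eigenvalue[OF x])
  then show ?thesis
    using s by (auto simp: abs_mult)
qed

lemma sign_disc_tight_frame_eq:
  fixes u :: "nat \<Rightarrow> complex^'d"
  assumes frame: "(\<Sum>i<n. outer (u i)) = mat (complex_of_real C)" and n: "n \<le> 2 * CARD('d) - 1"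
  shows "sign_disc n u = \<bar>C\<bar>"
proof (rule antisym)
  show "sign_disc n u \<le> \<bar>C\<bar>"
    using frame by (rule sign_disc_tight_frame_le)
  show "\<bar>C\<bar> \<le> sign_disc n u"
    by (rule le_sign_disc) (rule tight_frame_constant_le_spec_norm_signed[OF frame n])
qed

theorem theorem1p5:
  fixes n :: nat and u :: "nat \<Rightarrow> complex^'d"
  assumes "n \<ge> 1"
  shows "((\<exists>C::real. C > 0 \<and> (\<Sum>i<n. outer (u i)) = mat (complex_of_real C)) \<longrightarrow>
           sign_disc n u \<le> sqrt (real n / real CARD('d)) * sqrt (spec_norm (\<Sum>i<n. outer (u i) ** outer (u i))))
       \<and> (((\<forall>i<n. norm (u i) = 1) \<and> (\<Sum>i<n. outer (u i)) = mat (complex_of_real (real n / real CARD('d)))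
            \<and> CARD('d) \<le> n \<and> n \<le> 2 * CARD('d) - 1) \<longrightarrow>
           sign_disc n u = sqrt (real n / real CARD('d)) * sqrt (spec_norm (\<Sum>i<n. outer (u i) ** outer (u i))))"
proof (intro conjI impI)
  assume "\<exists>C. C > 0 \<and> (\<Sum>i<n. outer (u i)) = mat (complex_of_real C)"
  then obtain C where frame: "(\<Sum>i<n. outer (u i)) = mat (complex_of_real C)"
    by blast
  show "sign_disc n u
    \<le> sqrt (real n / real CARD('d)) * sqrt (spec_norm (\<Sum>i<n. outer (u i) ** outer (u i)))"
    using sign_disc_tight_frame_le[OF frame] tight_frame_constant_le[OF frame] by (rule order_trans)
next
  define c where "c = real n / real CARD('d)"
  assume "(\<forall>i<n. norm (u i) = 1) \<and> (\<Sum>i<n. outer (u i)) = mat (complex_of_real c)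
    \<and> CARD('d) \<le> n \<and> n \<le> 2 * CARD('d) - 1"
  then have unit: "\<forall>i<n. norm (u i) = 1" and frame: "(\<Sum>i<n. outer (u i)) = mat (complex_of_real c)"
    and n: "n \<le> 2 * CARD('d) - 1"
    by (simp_all add: c_def)
  have c_nonneg: "c \<ge> 0"
    by (simp add: c_def)
  have "(\<Sum>i<n. outer (u i) ** outer (u i)) = (\<Sum>i<n. outer (u i))"
    using unit by (intro sum.cong) (simp_all add: outer_mult_outer_self)
  then have "spec_norm (\<Sum>i<n. outer (u i) ** outer (u i)) = c"
    by (simp add: frame spec_norm_mat_of_real c_nonneg)
  moreover have "sign_disc n u = c"
    using sign_disc_tight_frame_eq[OF frame n] by (simp add: c_nonneg)
  ultimately show "sign_disc n u
    = sqrt (real n / real CARD('d)) * sqrt (spec_norm (\<Sum>i<n. outer (u i) ** outer (u i)))"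
    by (simp add: c_nonneg flip: c_def)
qed

end
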